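(* Let $\mu$ be a probability density on $\mathbb{R}^L$ that is strictly positive and $C^\infty$, whose moment generating function is finite everywhere, and whose mixed partial derivatives of all orders decay super-exponentially at infinity. Let $X\sim\mu$. For $r\in\mathbb{N}$ and $i\in\{2,\dots,L\}$ define, for $x\in\mathbb{R}^L$, $$h_r(x)=(-1)^r\frac{1}{\mu(x)}\frac{d^r}{dt^r}\mu(x+t\mathbf{e}_1)\Big|_{t=0},\qquad h_{r1;i}(x)=(-1)^{r+1}\frac{1}{\mu(x)}\frac{\partial^{r+1}}{\partial t^r\partial s}\mu(x+t\mathbf{e}_1+s\mathbf{e}_i)\Big|_{t=s=0}.$$ Then for every $\theta=(\theta_1,\dots,\theta_L)\in\mathbb{R}^L$, $$\frac{\mathbb{E}_\mu[h_r(X)\exp(X^\top\theta)]}{\mathbb{E}_\mu[\exp(X^\top\theta)]}=\theta_1^r\qquad\text{and}\qquad\frac{\mathbb{E}_\mu[h_{r1;i}(X)\exp(X^\top\theta)]}{\mathbb{E}_\mu[\exp(X^\top\theta)]}=\theta_1^r\theta_i.$$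
   Context: $\mathbf{e}_1,\dots,\mathbf{e}_L$ denote the canonical basis vectors of $\mathbb{R}^L$. *)

theory Defs
  imports "HOL-Analysis.Analysis"
begin

definition partial_dir :: "'n::finite \<Rightarrow> (real^'n \<Rightarrow> real) \<Rightarrow> real^'n \<Rightarrow> real" where
  "partial_dir j f x = deriv (\<lambda>t. f (x + t *\<^sub>R axis j 1)) 0"

text \<open>Mixed partial derivative of arbitrary order; the list gives the directions,
  the last element of the list is applied first.\<close>
fun partials :: "'n::finite list \<Rightarrow> (real^'n \<Rightarrow> real) \<Rightarrow> real^'n \<Rightarrow> real" where
  "partials [] f = f"
| "partials (j # js) f = partial_dir j (partials js f)"

definition smooth_fun :: "(real^'n::finite \<Rightarrow> real) \<Rightarrow> bool" where
  "smooth_fun f \<longleftrightarrow>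
     (\<forall>js. continuous_on UNIV (partials js f)) \<and>
     (\<forall>js j x. (\<lambda>t. partials js f (x + t *\<^sub>R axis j 1)) differentiable (at 0))"

definition prob_density :: "(real^'n::finite \<Rightarrow> real) \<Rightarrow> bool" where
  "prob_density \<mu> \<longleftrightarrow> (\<forall>x. 0 \<le> \<mu> x) \<and> integrable lborel \<mu> \<and> integral\<^sup>L lborel \<mu> = 1"

definition mgf_finite :: "(real^'n::finite \<Rightarrow> real) \<Rightarrow> bool" where
  "mgf_finite \<mu> \<longleftrightarrow> (\<forall>\<theta>. integrable lborel (\<lambda>x. exp (x \<bullet> \<theta>) * \<mu> x))"

definition superexp_decay :: "(real^'n::finite \<Rightarrow> real) \<Rightarrow> bool" where
  "superexp_decay \<mu> \<longleftrightarrow>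
     (\<forall>js c. ((\<lambda>x. partials js \<mu> x * exp (c * norm x)) \<longlongrightarrow> 0) at_infinity)"

definition expect :: "(real^'n::finite \<Rightarrow> real) \<Rightarrow> (real^'n \<Rightarrow> real) \<Rightarrow> real" where
  "expect \<mu> f = integral\<^sup>L lborel (\<lambda>x. f x * \<mu> x)"

text \<open>h_r, with k the first coordinate.\<close>
definition h_fun :: "'n::finite \<Rightarrow> (real^'n \<Rightarrow> real) \<Rightarrow> nat \<Rightarrow> real^'n \<Rightarrow> real" where
  "h_fun k \<mu> r x = (-1)^r / \<mu> x * (deriv ^^ r) (\<lambda>t. \<mu> (x + t *\<^sub>R axis k 1)) 0"

definition h_mixed :: "'n::finite \<Rightarrow> 'n \<Rightarrow> (real^'n \<Rightarrow> real) \<Rightarrow> nat \<Rightarrow> real^'n \<Rightarrow> real" where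
  "h_mixed k i \<mu> r x = (-1)^(r+1) / \<mu> x *
     (deriv ^^ r) (\<lambda>t. deriv (\<lambda>s. \<mu> (x + t *\<^sub>R axis k 1 + s *\<^sub>R axis i 1)) 0) 0"

end

(*
  Translation invariance of Lebesgue measure gives, for f = any partial derivative of mu,
    int f(x + t e_j) exp(x.theta) dx = exp(-t theta_j) int f(x) exp(x.theta) dx.
  Differentiating at t = 0 under the integral sign, which the super-exponential decay
  justifies with the dominating function C exp(-|x|), yields
    int (d_j f)(x) exp(x.theta) dx = -theta_j int f(x) exp(x.theta) dx,
  an integration by parts without boundary terms. Iterating it and dividing by
  Z = int mu(x) exp(x.theta) dx > 0 gives both identities: the signs (-1)^r and (-1)^(r+1)
  in h_r and h_(r1;i) cancel those of (-theta_1)^r and -theta_i.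
*)

theory Submission
  imports Defs "HOL-Probability.Sinc_Integral"
begin

lemma integrable_exp_neg_abs:
  fixes c :: real
  assumes "0 < c"
  shows "integrable lborel (\<lambda>x::real. exp (- c * \<bar>x\<bar>))"
proof -
  let ?f = "\<lambda>x::real. indicator {0<..} x * exp (- (x * c))"
  have pos: "integrable lborel ?f"
    using integrable_I0i_exp_mscale[OF assms] by (simp add: set_integrable_def)
  then have neg: "integrable lborel (\<lambda>x. ?f (- x))"
    using lborel_integrable_real_affine_iff[of "-1" ?f 0] by simp
  have "AE x in lborel. ?f x + ?f (- x) = exp (- c * \<bar>x\<bar>)"
    using AE_lborel_singleton[of 0] by eventually_elim (auto simp: indicator_def)
  moreover have "(\<lambda>x::real. exp (- c * \<bar>x\<bar>)) \<in> borel_measurable lborel"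
    by measurable
  ultimately show ?thesis
    using integrable_cong_AE_imp[OF Bochner_Integration.integrable_add[OF pos neg]] by blast
qed

lemma integrable_exp_neg_norm:
  fixes c :: real
  assumes "0 < c"
  shows "integrable lborel (\<lambda>x::'a::euclidean_space. exp (- c * norm x))"
proof -
  define a where "a = c / DIM('a)"
  have "0 < a"
    using assms by (simp add: a_def)
  have "product_sigma_finite (\<lambda>_::'a. lborel :: real measure)"
    by (simp add: product_sigma_finite_def lborel.sigma_finite_measure_axioms)
  then have "integrable (\<Pi>\<^sub>M b\<in>Basis. lborel) (\<lambda>f. \<Prod>b\<in>(Basis::'a set). exp (- a * \<bar>f b\<bar>))"
    by (rule product_sigma_finite.product_integrable_prod)
      (use integrable_exp_neg_abs[OF \<open>0 < a\<close>] in auto)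
  moreover have "(\<Sum>b'\<in>Basis. f b' *\<^sub>R b') \<bullet> b = f b" if "b \<in> (Basis::'a set)" for f b
    using that by (simp add: inner_sum_left inner_Basis if_distrib cong: if_cong)
  ultimately have prod: "integrable lborel (\<lambda>x::'a. \<Prod>b\<in>Basis. exp (- a * \<bar>x \<bullet> b\<bar>))"
    by (subst lborel_eq, subst integrable_distr_eq) (simp_all cong: prod.cong)
  have bound: "exp (- c * norm x) \<le> (\<Prod>b\<in>Basis. exp (- a * \<bar>x \<bullet> b\<bar>))" for x :: 'a
  proof -
    have "a * (\<Sum>b\<in>Basis. \<bar>x \<bullet> b\<bar>) \<le> a * (\<Sum>b\<in>(Basis::'a set). norm x)"
      using \<open>0 < a\<close> by (intro mult_left_mono sum_mono Basis_le_norm) auto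
    also have "\<dots> = c * norm x"
      by (simp add: a_def)
    finally show ?thesis
      by (simp add: sum_distrib_left sum_negf flip: exp_sum)
  qed
  show ?thesis
  proof (rule Bochner_Integration.integrable_bound[OF prod])
    show "(\<lambda>x. exp (- c * norm x)) \<in> borel_measurable lborel"
      by measurable
    show "AE x in lborel. norm (exp (- c * norm (x::'a))) \<le> norm (\<Prod>b\<in>Basis. exp (- a * \<bar>x \<bullet> b\<bar>))"
      by (intro AE_I2) (use bound in \<open>simp add: abs_prod\<close>)
  qed
qed

lemma bounded_range_if_tendsto_at_infinity:
  fixes g :: "'a::{real_normed_vector,heine_borel} \<Rightarrow> 'b::real_normed_vector"
  assumes "continuous_on UNIV g" and "(g \<longlongrightarrow> l) at_infinity"
  shows "bounded (range g)"
proof -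
  have "eventually (\<lambda>x. dist (g x) l < 1) at_infinity"
    using assms(2) by (rule tendstoD) simp
  then obtain R where R: "\<And>x. R \<le> norm x \<Longrightarrow> g x \<in> ball l 1"
    by (auto simp: eventually_at_infinity dist_commute)
  have "compact (g ` cball 0 R)"
    by (rule compact_continuous_image) (auto intro: continuous_on_subset[OF assms(1)])
  then have "bounded (g ` cball 0 R \<union> ball l 1)"
    by (simp add: compact_imp_bounded)
  moreover have "range g \<subseteq> g ` cball 0 R \<union> ball l 1"
    using R by (force simp: not_le)
  ultimately show ?thesis
    by (rule bounded_subset)
qed

lemma lborel_integral_translate_exp_inner:
  fixes f :: "'a::euclidean_space \<Rightarrow> real"
  assumes "f \<in> borel_measurable borel"
  shows "(\<integral>x. f (x + a) * exp (x \<bullet> \<theta>) \<partial>lborel)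
    = exp (- (a \<bullet> \<theta>)) * (\<integral>x. f x * exp (x \<bullet> \<theta>) \<partial>lborel)"
proof -
  have "(\<integral>x. f (x + a) * exp (x \<bullet> \<theta>) \<partial>lborel)
      = (\<integral>y. f y * exp ((y - a) \<bullet> \<theta>) \<partial>distr lborel borel ((+) a))"
    using assms by (subst integral_distr) (auto simp: add.commute)
  also have "\<dots> = (\<integral>y. exp (- (a \<bullet> \<theta>)) * (f y * exp (y \<bullet> \<theta>)) \<partial>lborel)"
    by (simp add: lborel_distr_plus inner_diff_left exp_diff exp_minus field_simps)
  finally show ?thesis
    by simp
qed

lemma has_real_derivative_integral:
  fixes F F' :: "real \<Rightarrow> 'a \<Rightarrow> real" and g :: "'a \<Rightarrow> real"
  assumes deriv: "\<And>x t. \<bar>t\<bar> \<le> 1 \<Longrightarrow> ((\<lambda>s. F s x) has_real_derivative F' t x) (at t)"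
    and integrable: "\<And>t. \<bar>t\<bar> \<le> 1 \<Longrightarrow> integrable M (F t)"
    and measurable_F': "F' 0 \<in> borel_measurable M"
    and dominated: "integrable M g" "\<And>x t. \<bar>t\<bar> \<le> 1 \<Longrightarrow> \<bar>F' t x\<bar> \<le> g x"
  shows "((\<lambda>t. \<integral>x. F t x \<partial>M) has_real_derivative (\<integral>x. F' 0 x \<partial>M)) (at 0)"
proof -
  define Q where "Q t x = (F t x - F 0 x) / t" for t x
  have Q_bound: "\<bar>Q t x\<bar> \<le> g x" if "\<bar>t\<bar> \<le> 1" for t x
  proof (cases "t = 0")
    case True
    \<comment> \<open>then \<open>Q t x = 0\<close>, by the convention \<open>x / 0 = 0\<close>\<close>
    then show ?thesis
      using dominated(2)[of 0 x] by (simp add: Q_def)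
  next
    case False
    have "norm (F t x - F 0 x) \<le> g x * norm (t - 0)"
      by (rule field_differentiable_bound[of "{-1..1}" "\<lambda>s. F s x" "\<lambda>s. F' s x"])
        (use that deriv dominated(2) in \<open>auto intro: has_field_derivative_at_within\<close>)
    with False show ?thesis
      by (simp add: Q_def pos_divide_le_eq)
  qed
  have Q_tendsto: "((\<lambda>t. Q t x) \<longlongrightarrow> F' 0 x) (at 0)" for x
    using deriv[of 0 x] by (simp add: Q_def has_field_derivative_iff)
  have "((\<lambda>t. \<integral>x. Q t x \<partial>M) \<longlongrightarrow> (\<integral>x. F' 0 x \<partial>M)) (at 0 within {-1..1})"
  proof (unfold tendsto_at_iff_sequentially comp_def, intro allI impI)
    fix X :: "nat \<Rightarrow> real"
    assume X: "\<forall>i. X i \<in> {-1..1} - {0}" "X \<longlonglongrightarrow> 0"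
    then have X_at: "filterlim X (at 0) sequentially"
      by (simp add: filterlim_at)
    have X_le: "\<bar>X i\<bar> \<le> 1" for i
      using X(1) by (auto simp: abs_le_iff)
    show "(\<lambda>i. \<integral>x. Q (X i) x \<partial>M) \<longlonglongrightarrow> (\<integral>x. F' 0 x \<partial>M)"
    proof (rule integral_dominated_convergence[where w = g])
      show "Q (X i) \<in> borel_measurable M" for i
      proof -
        have "integrable M (\<lambda>x. (F (X i) x - F 0 x) / X i)"
          using integrable[OF X_le] integrable[of 0]
          by (intro integrable_divide Bochner_Integration.integrable_diff) auto
        then show ?thesis
          unfolding Q_def[abs_def] by (rule borel_measurable_integrable)
      qed
      show "AE x in M. (\<lambda>i. Q (X i) x) \<longlonglongrightarrow> F' 0 x"
        using filterlim_compose[OF Q_tendsto X_at] by simp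
      show "AE x in M. norm (Q (X i) x) \<le> g x" for i
        by (intro AE_I2) (simp add: Q_bound[OF X_le])
    qed (use measurable_F' dominated(1) in auto)
  qed
  moreover have "(\<integral>x. Q t x \<partial>M) = ((\<integral>x. F t x \<partial>M) - (\<integral>x. F 0 x \<partial>M)) / (t - 0)"
    if "t \<in> {-1..1}" for t
    using that integrable[of t] integrable[of 0]
    by (simp add: Q_def abs_le_iff)
  then have "\<forall>\<^sub>F t in at 0 within {-1..1}.
      (\<integral>x. Q t x \<partial>M) = ((\<integral>x. F t x \<partial>M) - (\<integral>x. F 0 x \<partial>M)) / (t - 0)"
    by (auto simp: eventually_at_filter intro: always_eventually)
  ultimately have "((\<lambda>t. ((\<integral>x. F t x \<partial>M) - (\<integral>x. F 0 x \<partial>M)) / (t - 0))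
      \<longlongrightarrow> (\<integral>x. F' 0 x \<partial>M)) (at 0 within {-1..1})"
    by (rule Lim_transform_eventually)
  moreover have "at (0::real) within {-1..1} = at 0"
    by (rule at_within_Icc_at) simp_all
  ultimately show ?thesis
    unfolding has_field_derivative_iff by (simp only:)
qed

lemma integral_pos:
  fixes f :: "'a \<Rightarrow> real"
  assumes "emeasure M (space M) \<noteq> 0" "integrable M f" "\<And>x. x \<in> space M \<Longrightarrow> 0 < f x"
  shows "0 < integral\<^sup>L M f"
proof -
  have "integral\<^sup>L M f \<noteq> 0"
  proof
    assume "integral\<^sup>L M f = 0"
    then have "AE x in M. f x = 0"
      using assms(2,3) by (subst integral_nonneg_eq_0_iff_AE[symmetric]) (auto intro: less_imp_le)
    moreover have "AE x in M. f x = 0 \<longrightarrow> False"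
      using assms(3) by (intro AE_I2) force
    ultimately have "AE x in M. False"
      by (rule AE_mp)
    with assms(1) show False
      by (simp add: eventually_False ae_filter_eq_bot_iff)
  qed
  moreover have "0 \<le> integral\<^sup>L M f"
    using assms(3) by (intro integral_nonneg_AE AE_I2) (auto intro: less_imp_le)
  ultimately show ?thesis
    by simp
qed

lemma deriv_along_line_shift:
  fixes x v :: "'a::real_normed_vector"
  shows "deriv (\<lambda>t. f (x + t *\<^sub>R v)) s = deriv (\<lambda>u. f ((x + s *\<^sub>R v) + u *\<^sub>R v)) 0"
proof -
  have "(\<lambda>u. f (x + (u + s) *\<^sub>R v)) = (\<lambda>u. f ((x + s *\<^sub>R v) + u *\<^sub>R v))"
    by (simp add: scaleR_add_left add_ac)
  then show ?thesis
    unfolding deriv_def using DERIV_shift[of "\<lambda>t. f (x + t *\<^sub>R v)" _ 0 s] by simp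
qed

lemma funpow_deriv_along_axis:
  "(deriv ^^ r) (\<lambda>t. f (x + t *\<^sub>R axis j 1)) = (\<lambda>t. partials (replicate r j) f (x + t *\<^sub>R axis j 1))"
  by (induction r) (simp_all add: deriv_along_line_shift[of _ x] partial_dir_def)

lemma partials_append: "partials (js @ ks) f = partials js (partials ks f)"
  by (induction js) auto

lemma h_fun_eq_partials: "h_fun k \<mu> r x = (-1) ^ r / \<mu> x * partials (replicate r k) \<mu> x"
  by (simp add: h_fun_def funpow_deriv_along_axis)

lemma h_mixed_eq_partials:
  "h_mixed k i \<mu> r x = (-1) ^ (r + 1) / \<mu> x * partials (replicate r k @ [i]) \<mu> x"
proof -
  have "(\<lambda>t. deriv (\<lambda>s. \<mu> (x + t *\<^sub>R axis k 1 + s *\<^sub>R axis i 1)) 0)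
      = (\<lambda>t. partials [i] \<mu> (x + t *\<^sub>R axis k 1))"
    by (simp add: partial_dir_def)
  then show ?thesis
    by (simp add: h_mixed_def funpow_deriv_along_axis partials_append)
qed

lemma smooth_fun_continuous_partials: "smooth_fun f \<Longrightarrow> continuous_on UNIV (partials js f)"
  by (simp add: smooth_fun_def)

lemma smooth_fun_has_derivative_along_axis:
  assumes "smooth_fun f"
  shows "((\<lambda>t. partials js f (x + t *\<^sub>R axis j 1)) has_real_derivative
      partials (j # js) f (x + s *\<^sub>R axis j 1)) (at s)"
proof -
  let ?g = "\<lambda>u. partials js f ((x + s *\<^sub>R axis j 1) + u *\<^sub>R axis j 1)"
  have "?g differentiable at 0"
    using assms by (simp add: smooth_fun_def)
  then have "(?g has_real_derivative partials (j # js) f (x + s *\<^sub>R axis j 1)) (at 0)"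
    by (simp add: DERIV_deriv_iff_real_differentiable partial_dir_def)
  moreover have "(\<lambda>u. partials js f (x + (u + s) *\<^sub>R axis j 1)) = ?g"
    by (simp add: scaleR_add_left add_ac)
  ultimately show ?thesis
    using DERIV_shift[of "\<lambda>t. partials js f (x + t *\<^sub>R axis j 1)" _ 0 s] by simp
qed

context
  fixes \<mu> :: "real^'n::finite \<Rightarrow> real"
  assumes smooth: "smooth_fun \<mu>" and decay: "superexp_decay \<mu>"
begin

lemma partials_decay_bound: "\<exists>M. \<forall>x. \<bar>partials js \<mu> x\<bar> \<le> M * exp (- c * norm x)"
proof -
  let ?g = "\<lambda>x. partials js \<mu> x * exp (c * norm x)"
  have "bounded (range ?g)"
    using decay unfolding superexp_decay_def
    by (intro bounded_range_if_tendsto_at_infinity continuous_intros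
        smooth_fun_continuous_partials[OF smooth]) auto
  then obtain M where "\<And>x. \<bar>?g x\<bar> \<le> M"
    by (auto simp: bounded_iff)
  then have "\<bar>partials js \<mu> x\<bar> * exp (c * norm x) \<le> M" for x
    by (simp add: abs_mult)
  then have "\<bar>partials js \<mu> x\<bar> \<le> M * exp (- c * norm x)" for x
    by (simp add: exp_minus field_simps)
  then show ?thesis
    by blast
qed

lemma partials_translate_exp_bound:
  "\<exists>M. \<forall>x a. norm a \<le> 1 \<longrightarrow> \<bar>partials js \<mu> (x + a) * exp (x \<bullet> \<theta>)\<bar> \<le> M * exp (- norm x)"
proof -
  define c where "c = norm \<theta> + 1"
  obtain M where M: "\<And>y. \<bar>partials js \<mu> y\<bar> \<le> M * exp (- c * norm y)"
    using partials_decay_bound by blast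
  have "\<bar>partials js \<mu> 0\<bar> \<le> M"
    using M[of 0] by simp
  then have "0 \<le> M"
    by (rule order_trans[OF abs_ge_zero])
  have "0 \<le> c"
    by (simp add: c_def)
  have "\<bar>partials js \<mu> (x + a) * exp (x \<bullet> \<theta>)\<bar> \<le> M * exp c * exp (- norm x)"
    if "norm a \<le> 1" for x a
  proof -
    have "norm x - 1 \<le> norm (x + a)"
      using that norm_triangle_ineq4[of "x + a" a] by simp
    then have "exp (- c * norm (x + a)) \<le> exp (- c * (norm x - 1))"
      using mult_left_mono_neg[OF _ neg_le_0_iff_le[THEN iffD2, OF \<open>0 \<le> c\<close>]] by simp
    then have "\<bar>partials js \<mu> (x + a)\<bar> \<le> M * exp (- c * (norm x - 1))"
      using M[of "x + a"] \<open>0 \<le> M\<close> by (meson mult_left_mono order_trans)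
    moreover have "exp (x \<bullet> \<theta>) \<le> exp (norm x * norm \<theta>)"
      using norm_cauchy_schwarz[of x \<theta>] by simp
    ultimately have "\<bar>partials js \<mu> (x + a) * exp (x \<bullet> \<theta>)\<bar>
        \<le> M * exp (- c * (norm x - 1)) * exp (norm x * norm \<theta>)"
      unfolding abs_mult by (intro mult_mono) auto
    also have "\<dots> = M * exp c * exp (- norm x)"
    proof -
      have "- c * (norm x - 1) + norm x * norm \<theta> = c + - norm x"
        by (simp add: c_def algebra_simps)
      then show ?thesis
        by (simp add: mult.assoc flip: exp_add)
    qed
    finally show ?thesis .
  qed
  then show ?thesis
    by blast
qed

lemma integrable_partials_translate_exp:
  assumes "norm a \<le> 1"
  shows "integrable lborel (\<lambda>x. partials js \<mu> (x + a) * exp (x \<bullet> \<theta>))"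
proof -
  obtain M where M: "\<And>x. \<bar>partials js \<mu> (x + a) * exp (x \<bullet> \<theta>)\<bar> \<le> M * exp (- norm x)"
    using partials_translate_exp_bound[of js \<theta>] assms by blast
  have "continuous_on UNIV (\<lambda>x. partials js \<mu> (x + a) * exp (x \<bullet> \<theta>))"
    by (intro continuous_intros continuous_on_compose2[OF smooth_fun_continuous_partials[OF smooth]])
      auto
  then have measurable_shift: "(\<lambda>x. partials js \<mu> (x + a) * exp (x \<bullet> \<theta>)) \<in> borel_measurable lborel"
    by (simp add: borel_measurable_continuous_onI)
  have "integrable lborel (\<lambda>x::real^'n. M * exp (- norm x))"
    using integrable_exp_neg_norm[of 1, where 'a = "real^'n"] by simp
  then show ?thesis
  proof (rule Bochner_Integration.integrable_bound[OF _ measurable_shift])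
    show "AE x in lborel. norm (partials js \<mu> (x + a) * exp (x \<bullet> \<theta>)) \<le> norm (M * exp (- norm x))"
      by (intro AE_I2) (metis M abs_ge_self order_trans real_norm_def)
  qed
qed

lemma integral_partial_exp:
  "(\<integral>x. partials (j # js) \<mu> x * exp (x \<bullet> \<theta>) \<partial>lborel)
    = - (\<theta> $ j) * (\<integral>x. partials js \<mu> x * exp (x \<bullet> \<theta>) \<partial>lborel)"
proof -
  let ?v = "axis j 1 :: real^'n"
  define I where "I = (\<integral>x. partials js \<mu> x * exp (x \<bullet> \<theta>) \<partial>lborel)"
  obtain M where M: "\<And>x a. norm a \<le> 1 \<Longrightarrow>
      \<bar>partials (j # js) \<mu> (x + a) * exp (x \<bullet> \<theta>)\<bar> \<le> M * exp (- norm x)"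
    using partials_translate_exp_bound[of "j # js" \<theta>] by blast
  have derivative: "((\<lambda>t. \<integral>x. partials js \<mu> (x + t *\<^sub>R ?v) * exp (x \<bullet> \<theta>) \<partial>lborel) has_real_derivative
      (\<integral>x. partials (j # js) \<mu> (x + 0 *\<^sub>R ?v) * exp (x \<bullet> \<theta>) \<partial>lborel)) (at 0)"
  proof (rule has_real_derivative_integral[where g = "\<lambda>x. M * exp (- norm x)"])
    show "((\<lambda>s. partials js \<mu> (x + s *\<^sub>R ?v) * exp (x \<bullet> \<theta>)) has_real_derivative
        partials (j # js) \<mu> (x + t *\<^sub>R ?v) * exp (x \<bullet> \<theta>)) (at t)" for x t
      by (intro DERIV_cmult_right smooth_fun_has_derivative_along_axis[OF smooth])
    show "integrable lborel (\<lambda>x. partials js \<mu> (x + t *\<^sub>R ?v) * exp (x \<bullet> \<theta>))"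
      if "\<bar>t\<bar> \<le> 1" for t
      using that by (intro integrable_partials_translate_exp) simp
    show "(\<lambda>x. partials (j # js) \<mu> (x + 0 *\<^sub>R ?v) * exp (x \<bullet> \<theta>)) \<in> borel_measurable lborel"
      using borel_measurable_integrable[OF integrable_partials_translate_exp[of 0 "j # js" \<theta>]]
      by simp
    show "integrable lborel (\<lambda>x::real^'n. M * exp (- norm x))"
      using integrable_exp_neg_norm[of 1, where 'a = "real^'n"] by simp
    show "\<bar>partials (j # js) \<mu> (x + t *\<^sub>R ?v) * exp (x \<bullet> \<theta>)\<bar> \<le> M * exp (- norm x)"
      if "\<bar>t\<bar> \<le> 1" for x t
      using that by (intro M) simp
  qed
  have "partials js \<mu> \<in> borel_measurable borel"
    using smooth_fun_continuous_partials[OF smooth] by (rule borel_measurable_continuous_onI)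
  then have translate: "(\<lambda>t. \<integral>x. partials js \<mu> (x + t *\<^sub>R ?v) * exp (x \<bullet> \<theta>) \<partial>lborel)
      = (\<lambda>t. exp (- t * \<theta> $ j) * I)"
    by (simp add: I_def lborel_integral_translate_exp_inner inner_axis')
  have "((\<lambda>t. exp (- t * \<theta> $ j) * I) has_real_derivative - \<theta> $ j * I) (at 0)"
    by (auto intro!: derivative_eq_intros)
  with derivative have "(\<integral>x. partials (j # js) \<mu> (x + 0 *\<^sub>R ?v) * exp (x \<bullet> \<theta>) \<partial>lborel)
      = - \<theta> $ j * I"
    unfolding translate by (rule DERIV_unique)
  then show ?thesis
    by (simp only: scaleR_zero_left add_0_right I_def)
qed

lemma integral_partials_replicate_exp:
  "(\<integral>x. partials (replicate r j @ js) \<mu> x * exp (x \<bullet> \<theta>) \<partial>lborel)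
    = (- (\<theta> $ j)) ^ r * (\<integral>x. partials js \<mu> x * exp (x \<bullet> \<theta>) \<partial>lborel)"
proof (induction r)
  case (Suc r)
  have "partials (replicate (Suc r) j @ js) \<mu> = partials (j # (replicate r j @ js)) \<mu>"
    by simp
  then show ?case
    by (simp only: integral_partial_exp Suc.IH power_Suc mult.assoc)
qed simp

end

theorem proposition1:
  fixes \<mu> :: "real^'n::finite \<Rightarrow> real" and k i :: 'n and r :: nat and \<theta> :: "real^'n"
  assumes "prob_density \<mu>"
    and "\<forall>x. \<mu> x > 0"
    and "smooth_fun \<mu>"
    and "mgf_finite \<mu>"
    and "superexp_decay \<mu>"
    and "i \<noteq> k"
  shows "expect \<mu> (\<lambda>x. h_fun k \<mu> r x * exp (x \<bullet> \<theta>)) / expect \<mu> (\<lambda>x. exp (x \<bullet> \<theta>)) = (\<theta> $ k) ^ r \<and>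
         expect \<mu> (\<lambda>x. h_mixed k i \<mu> r x * exp (x \<bullet> \<theta>)) / expect \<mu> (\<lambda>x. exp (x \<bullet> \<theta>))
           = (\<theta> $ k) ^ r * (\<theta> $ i)"
proof -
  have \<mu>_pos: "\<And>x. 0 < \<mu> x"
    using assms(2) by blast
  define Z where "Z = (\<integral>x. partials [] \<mu> x * exp (x \<bullet> \<theta>) \<partial>lborel)"
  have "0 < Z"
    unfolding Z_def using integrable_partials_translate_exp[OF assms(3,5), of 0 "[]" \<theta>] \<mu>_pos
    by (intro integral_pos) simp_all
  have weighted: "expect \<mu> (\<lambda>x. c / \<mu> x * partials js \<mu> x * exp (x \<bullet> \<theta>))
      = c * (\<integral>x. partials js \<mu> x * exp (x \<bullet> \<theta>) \<partial>lborel)" for c js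
  proof -
    have "c / \<mu> x * partials js \<mu> x * exp (x \<bullet> \<theta>) * \<mu> x = c * (partials js \<mu> x * exp (x \<bullet> \<theta>))"
      for x
      using \<mu>_pos[of x] by simp
    then show ?thesis
      by (simp add: expect_def)
  qed
  have "expect \<mu> (\<lambda>x. exp (x \<bullet> \<theta>)) = Z"
    by (simp add: expect_def Z_def mult.commute)
  moreover have "expect \<mu> (\<lambda>x. h_fun k \<mu> r x * exp (x \<bullet> \<theta>)) = (\<theta> $ k) ^ r * Z"
    using weighted[of "(-1) ^ r" "replicate r k"]
      integral_partials_replicate_exp[OF assms(3,5), of r k "[]" \<theta>]
    by (simp add: h_fun_eq_partials Z_def flip: power_mult_distrib)
  moreover have "expect \<mu> (\<lambda>x. h_mixed k i \<mu> r x * exp (x \<bullet> \<theta>)) = (\<theta> $ k) ^ r * \<theta> $ i * Z"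
    using weighted[of "(-1) ^ (r + 1)" "replicate r k @ [i]"]
      integral_partials_replicate_exp[OF assms(3,5), of r k "[i]" \<theta>]
      integral_partial_exp[OF assms(3,5), of i "[]" \<theta>]
    by (simp add: h_mixed_eq_partials Z_def flip: power_mult_distrib)
  ultimately show ?thesis
    using \<open>0 < Z\<close> by simp
qed

end
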